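(* Assume the setup below, with $t_{\min}$ known, $D\subset B_R$ and $|x|=R$. (i) For every $y\in A_D^{(x)}$ there exists $\epsilon_0>0$ such that $\tilde\phi^{(x)}_{y,\eta,\epsilon}\in\mathrm{Range}(\tilde L_D^{(x)})$ for all $\epsilon\in(0,\epsilon_0)$ and all $\eta\in(t_{\min},t_{\max}]$. (ii) Let $\eta\in(t_{\min},t_{\max}]$. If $y\notin\overline{A_{D,\eta}^{(x)}}$, then $\tilde\phi^{(x)}_{y,\eta,\epsilon}\notin\mathrm{Range}(\tilde L_D^{(x)})$ for all $\epsilon>0$.
   Context: $D\subset\mathbb R^3$ is a bounded Lipschitz domain (open, connected) with $\mathbb R^3\setminus\overline D$ connected, $D\subset B_R=\{|x|<R\}$; $0\le t_{\min}<t_{\max}$; $S\in C([t_{\min},t_{\max}];L^\infty(D))$ real-valued with $S\ge c_0>0$ a.e. on $D\times[t_{\min},t_{\max}]$. Let $0\le k_{\min}<k_{\max}$, $K=(k_{\max}-k_{\min})/2$, $X_D=L^2(D\times(t_{\min},t_{\max}))$. For $|x|=R$, $\tilde L_D^{(x)}:X_D\to L^2(0,K)$ is $(\tilde L_D^{(x)}u)(\tau)=\int_{t_{\min}}^{t_{\max}}\int_D e^{{\rm i}\tau(t+|x-y|)}u(y,t)\,dy\,dt$, $\tau\in[0,K]$. Test function: for $y\in\mathbb R^3$, $\epsilon>0$, $\eta>t_{\min}$, $\tilde\phi^{(x)}_{y,\eta,\epsilon}(k)=\frac{1}{(\eta-t_{\min})|B_\epsilon(y)|}\int_{t_{\min}}^{\eta}\int_{B_\epsilon(y)}e^{{\rm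 i}k(t+|x-z|)}\,dz\,dt$, $k\in[0,K]$ ($B_\epsilon(y)$ open ball, $|B_\epsilon(y)|$ its volume). Annuli: $A_D^{(x)}=\{y\in\mathbb R^3:\inf_{z\in D}|x-z|<|x-y|<\sup_{z\in D}|x-z|\}$ and $A_{D,\eta}^{(x)}=\{y\in\mathbb R^3:\inf_{z\in D}|x-z|<|x-y|<\sup_{z\in D}|x-z|+t_{\max}-\eta\}$. *)

theory Defs
  imports "HOL-Analysis.Analysis"
begin

type_synonym pt = "real^3"

definition lipschitz_domain :: "pt set \<Rightarrow> bool" where
  "lipschitz_domain D \<longleftrightarrow> open D \<and> bounded D \<and> connected D \<and> D \<noteq> {} \<and>
     (\<forall>p\<in>frontier D. \<exists>r>0. \<exists>Q::pt \<Rightarrow> pt. \<exists>g::real \<times> real \<Rightarrow> real. \<exists>C.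
        orthogonal_transformation Q \<and> C-lipschitz_on UNIV g \<and>
        D \<inter> ball p r = {y \<in> ball p r. (Q (y - p)) $ 3 > g ((Q (y - p)) $ 1, (Q (y - p)) $ 2)})"

definition XD :: "pt set \<Rightarrow> real \<Rightarrow> real \<Rightarrow> (pt \<times> real \<Rightarrow> complex) set" where
  "XD D tmin tmax = {u. u \<in> borel_measurable lborel \<and>
      set_integrable lborel (D \<times> {tmin<..<tmax}) (\<lambda>p. (cmod (u p))\<^sup>2)}"

definition LD :: "pt set \<Rightarrow> real \<Rightarrow> real \<Rightarrow> pt \<Rightarrow> (pt \<times> real \<Rightarrow> complex) \<Rightarrow> real \<Rightarrow> complex" where
  "LD D tmin tmax x u \<tau> =
     (LINT p : D \<times> {tmin<..<tmax} | lborel.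
        exp (\<i> * complex_of_real (\<tau> * (snd p + dist x (fst p)))) * u p)"

text \<open>Range of \<tilde>L_D^{(x)} as a map into L^2(0,K): equality almost everywhere on (0,K).\<close>
definition in_range_LD :: "pt set \<Rightarrow> real \<Rightarrow> real \<Rightarrow> real \<Rightarrow> pt \<Rightarrow> (real \<Rightarrow> complex) \<Rightarrow> bool" where
  "in_range_LD D tmin tmax K x \<phi> \<longleftrightarrow>
     (\<exists>u \<in> XD D tmin tmax. AE \<tau> in lborel. \<tau> \<in> {0<..<K} \<longrightarrow> LD D tmin tmax x u \<tau> = \<phi> \<tau>)"

definition test_fn :: "real \<Rightarrow> pt \<Rightarrow> pt \<Rightarrow> real \<Rightarrow> real \<Rightarrow> real \<Rightarrow> complex" where
  "test_fn tmin x y \<eta> \<epsilon> k =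
     complex_of_real (1 / ((\<eta> - tmin) * measure lborel (ball y \<epsilon>))) *
     (LINT p : ball y \<epsilon> \<times> {tmin<..<\<eta>} | lborel.
        exp (\<i> * complex_of_real (k * (snd p + dist x (fst p)))))"

definition annulus_D :: "pt set \<Rightarrow> pt \<Rightarrow> pt set" where
  "annulus_D D x = {y. (INF z\<in>D. dist x z) < dist x y \<and> dist x y < (SUP z\<in>D. dist x z)}"

definition annulus_D_eta :: "pt set \<Rightarrow> real \<Rightarrow> real \<Rightarrow> pt \<Rightarrow> pt set" where
  "annulus_D_eta D tmax \<eta> x =
     {y. (INF z\<in>D. dist x z) < dist x y \<and> dist x y < (SUP z\<in>D. dist x z) + tmax - \<eta>}"

end

theory Submission
  imports Defs "HOL-Complex_Analysis.Cauchy_Integral_Formula"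
begin

text \<open>
  (i) If \<open>|x - y|\<close> lies strictly between the least and the largest distance from \<open>x\<close> to the
  connected set \<open>D\<close>, some \<open>z \<in> D\<close> has \<open>|x - z| = |x - y|\<close>. The reflection in the bisecting
  hyperplane of \<open>y\<close> and \<open>z\<close> fixes \<open>x\<close> and preserves Lebesgue measure, so the test function is
  the data of the uniform source on \<open>B\<^sub>\<epsilon>(z) \<times> (t\<^sub>m\<^sub>i\<^sub>n, \<eta>)\<close>, which lies in
  \<open>D \<times> (t\<^sub>m\<^sub>i\<^sub>n, t\<^sub>m\<^sub>a\<^sub>x)\<close> for small \<open>\<epsilon>\<close>.

  (ii) If \<open>L u\<close> agrees with the test function on \<open>(0, K)\<close>, the difference \<open>g\<close> of \<open>u\<close> and the test
  source has data \<open>k \<mapsto> \<integral> e\<^sup>i\<^sup>k\<^sup>\<phi> g\<close> with arrival time \<open>\<phi>(z, t) = t + |x - z|\<close> bounded on the support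
  of \<open>g\<close>. This is an entire function of \<open>k\<close> whose Taylor coefficients are the moments of \<open>\<phi>\<close>
  against \<open>g\<close>; vanishing on \<open>(0, K)\<close> it vanishes identically, and by Weierstrass approximation
  \<open>\<integral> h(\<phi>) g = 0\<close> for every continuous \<open>h\<close>. Since \<open>y\<close> lies outside the closed annulus, some
  \<open>h \<ge> 0\<close> vanishes on all arrival times from \<open>D \<times> (t\<^sub>m\<^sub>i\<^sub>n, t\<^sub>m\<^sub>a\<^sub>x)\<close> but not on all arrival
  times from the test source, and then \<open>\<integral> h(\<phi>) g < 0\<close>.
\<close>

section \<open>Moments and Fourier data\<close>

lemma AE_lborel_imp_ex_in_open:
  fixes U :: "'a::euclidean_space set"
  assumes "AE p in lborel. P p" "open U" "U \<noteq> {}"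
  shows "\<exists>p\<in>U. P p"
proof (rule ccontr)
  assume "\<not> (\<exists>p\<in>U. P p)"
  with assms(1) have "AE p in lborel. p \<notin> U" by (auto elim: eventually_mono)
  then have "U \<in> null_sets lborel"
    using assms(2) by (simp add: AE_iff_null_sets)
  then have "negligible U"
    by (simp add: negligible_iff_null_sets null_sets_completionI)
  with assms(2,3) open_not_negligible show False by blast
qed

lemma powser_eq_0_imp_coeffs_eq_0:
  fixes a :: "nat \<Rightarrow> complex"
  assumes sums: "\<And>w. (\<lambda>n. a n * w ^ n) sums f w" and "K > 0"
    and zero: "AE k in lborel. k \<in> {0<..<K} \<longrightarrow> f (complex_of_real k) = 0"
  shows "a j = 0"
proof -
  have zeros: "\<exists>k\<in>{0<..<d}. f (complex_of_real k) = 0" if "d > 0" for d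
    using AE_lborel_imp_ex_in_open[OF zero, of "{0<..<min d K}"] that \<open>K > 0\<close> by force
  have f_eq: "f = (\<lambda>w. \<Sum>n. a n * w ^ n)"
    using sums by (auto simp: sums_iff)
  have cont: "isCont f 0"
    unfolding f_eq by (rule isCont_powser_converges_everywhere) (use sums in \<open>auto simp: sums_iff\<close>)
  have f0_coeff: "f 0 = a 0"
    unfolding f_eq by (simp add: powser_zero)
  have f0: "f 0 = 0"
  proof (rule ccontr)
    assume "f 0 \<noteq> 0"
    with cont have "\<exists>\<delta>>0. \<forall>w. w \<noteq> 0 \<and> norm (w - 0) < \<delta> \<longrightarrow> norm (f w - f 0) < norm (f 0)"
      unfolding isCont_def LIM_eq by simp
    then obtain \<delta> where "\<delta> > 0" and \<delta>: "\<And>w. w \<noteq> 0 \<Longrightarrow> norm w < \<delta> \<Longrightarrow> norm (f w - f 0) < norm (f 0)"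
      by auto
    obtain k where "k \<in> {0<..<\<delta>}" "f (complex_of_real k) = 0" using zeros[OF \<open>\<delta> > 0\<close>] by blast
    with \<delta>[of "complex_of_real k"] show False by simp
  qed
  show "a j = 0"
  proof (rule ccontr)
    assume "a j \<noteq> 0"
    moreover have "j > 0" using f0_coeff f0 calculation by (cases j) auto
    ultimately obtain s where "s > 0" and nonzero: "\<And>z. z \<in> cball 0 s - {0} \<Longrightarrow> f z \<noteq> 0"
      using powser_0_nonzero[where r=1 and \<xi>=0 and a=a and f=f and m=j] sums f0 by auto
    obtain k where "k \<in> {0<..<s}" "f (complex_of_real k) = 0" using zeros[OF \<open>s > 0\<close>] by blast
    with nonzero[of "complex_of_real k"] show False by auto
  qed
qed

lemma integral_exp_moments_sums:
  fixes g :: "'a \<Rightarrow> complex" and \<phi> :: "'a \<Rightarrow> real"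
  assumes g: "integrable M g" and [measurable]: "\<phi> \<in> borel_measurable M"
    and bound: "\<And>p. g p \<noteq> 0 \<Longrightarrow> \<bar>\<phi> p\<bar> \<le> B" and "B \<ge> 0"
  shows "(\<lambda>n. ((\<i> * k) ^ n / fact n) * (\<integral>p. complex_of_real (\<phi> p ^ n) * g p \<partial>M))
          sums (\<integral>p. exp (\<i> * (k * complex_of_real (\<phi> p))) * g p \<partial>M)"
proof -
  have [measurable]: "g \<in> borel_measurable M" using g by simp
  define f where "f n p = ((\<i> * k) ^ n / fact n) * (complex_of_real (\<phi> p ^ n) * g p)" for n p
  define C where "C n = (norm k * B) ^ n / fact n" for n
  have C_nonneg: "C n \<ge> 0" for n
    unfolding C_def using \<open>B \<ge> 0\<close> by simp
  have f_le: "norm (f n p) \<le> C n * norm (g p)" for n p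
  proof (cases "g p = 0")
    case False
    then have "\<bar>\<phi> p\<bar> ^ n \<le> B ^ n" using bound by (simp add: power_mono)
    then have "(norm k * \<bar>\<phi> p\<bar>) ^ n * norm (g p) \<le> (norm k * B) ^ n * norm (g p)"
      by (intro mult_right_mono) (simp_all add: power_mult_distrib mult_left_mono)
    then show ?thesis unfolding f_def C_def
      by (simp add: norm_mult norm_divide norm_power power_mult_distrib divide_right_mono mult_ac)
  qed (simp add: f_def C_nonneg)
  have [measurable]: "f n \<in> borel_measurable M" for n
    unfolding f_def by measurable
  have f_integrable: "integrable M (f n)" for n
    by (rule Bochner_Integration.integrable_bound[of _ "\<lambda>p. C n * norm (g p)"])
       (use g f_le C_nonneg in \<open>auto intro!: AE_I2 simp: abs_of_nonneg\<close>)
  have "summable C"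
    unfolding C_def using exp_converges[of "norm k * B"] by (simp add: sums_iff divide_inverse mult.commute)
  have "(\<lambda>n. integral\<^sup>L M (f n)) sums (\<integral>p. (\<Sum>n. f n p) \<partial>M)"
  proof (rule sums_integral[OF f_integrable])
    show "AE p in M. summable (\<lambda>n. norm (f n p))"
      by (intro AE_I2 summable_comparison_test[OF _ summable_mult2[OF \<open>summable C\<close>]]) (use f_le in auto)
    have "(\<integral>p. norm (f n p) \<partial>M) \<le> C n * (\<integral>p. norm (g p) \<partial>M)" for n
      using f_le by (subst integral_mult_right_zero[symmetric])
        (intro integral_mono integrable_norm f_integrable integrable_mult_right g)
    then show "summable (\<lambda>n. \<integral>p. norm (f n p) \<partial>M)"
      by (intro summable_comparison_test[OF _ summable_mult2[OF \<open>summable C\<close>]]) auto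
  qed
  moreover have "(\<lambda>n. f n p) sums (exp (\<i> * (k * complex_of_real (\<phi> p))) * g p)" for p
    using sums_mult2[OF exp_converges[of "\<i> * (k * complex_of_real (\<phi> p))"], of "g p"]
    by (simp add: f_def scaleR_conv_of_real power_mult_distrib field_simps)
  then have "(\<integral>p. (\<Sum>n. f n p) \<partial>M) = (\<integral>p. exp (\<i> * (k * complex_of_real (\<phi> p))) * g p \<partial>M)"
    by (simp add: sums_iff)
  moreover have "integral\<^sup>L M (f n) = ((\<i> * k) ^ n / fact n) * (\<integral>p. complex_of_real (\<phi> p ^ n) * g p \<partial>M)" for n
    unfolding f_def by (rule integral_mult_right_zero)
  ultimately show ?thesis by simp
qed

lemma
  fixes g :: "'a \<Rightarrow> complex" and \<phi> :: "'a \<Rightarrow> real" and r :: "real \<Rightarrow> real"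
  assumes g: "integrable M g" and [measurable]: "\<phi> \<in> borel_measurable M" "r \<in> borel_measurable borel"
    and bound: "\<And>p. g p \<noteq> 0 \<Longrightarrow> \<bar>\<phi> p\<bar> \<le> B" and r_bound: "\<And>s. \<bar>s\<bar> \<le> B \<Longrightarrow> \<bar>r s\<bar> \<le> C"
  shows integrable_bounded_comp_mult: "integrable M (\<lambda>p. complex_of_real (r (\<phi> p)) * g p)"
    and norm_integral_bounded_comp_mult_le:
      "norm (\<integral>p. complex_of_real (r (\<phi> p)) * g p \<partial>M) \<le> C * (\<integral>p. norm (g p) \<partial>M)"
proof -
  have [measurable]: "g \<in> borel_measurable M" using g by simp
  have le: "norm (complex_of_real (r (\<phi> p)) * g p) \<le> C * norm (g p)" for p
    using bound[of p] r_bound[of "\<phi> p"] by (cases "g p = 0") (auto simp: norm_mult mult_right_mono)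
  show int: "integrable M (\<lambda>p. complex_of_real (r (\<phi> p)) * g p)"
    by (rule Bochner_Integration.integrable_bound[of _ "\<lambda>p. C * norm (g p)"])
      (use g le in \<open>auto intro!: AE_I2 intro: order_trans[OF _ abs_ge_self]\<close>)
  have "norm (\<integral>p. complex_of_real (r (\<phi> p)) * g p \<partial>M) \<le> (\<integral>p. norm (complex_of_real (r (\<phi> p)) * g p) \<partial>M)"
    by (rule integral_norm_bound)
  also have "\<dots> \<le> (\<integral>p. C * norm (g p) \<partial>M)"
    using int g le by (intro integral_mono integrable_norm integrable_mult_right) auto
  finally show "norm (\<integral>p. complex_of_real (r (\<phi> p)) * g p \<partial>M) \<le> C * (\<integral>p. norm (g p) \<partial>M)"
    by simp
qed

text \<open>Uniform approximation of \<open>h\<close> by polynomials on \<open>[-B, B]\<close>.\<close>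
lemma integral_comp_eq_0_if_moments_eq_0:
  fixes g :: "'a \<Rightarrow> complex" and \<phi> :: "'a \<Rightarrow> real" and h :: "real \<Rightarrow> real"
  assumes g: "integrable M g" and [measurable]: "\<phi> \<in> borel_measurable M"
    and bound: "\<And>p. g p \<noteq> 0 \<Longrightarrow> \<bar>\<phi> p\<bar> \<le> B"
    and moments: "\<And>n. (\<integral>p. complex_of_real (\<phi> p ^ n) * g p \<partial>M) = 0"
    and h: "continuous_on UNIV h"
  shows "(\<integral>p. complex_of_real (h (\<phi> p)) * g p \<partial>M) = 0"
proof -
  have [measurable]: "h \<in> borel_measurable borel"
    using h borel_measurable_continuous_onI by blast
  define I where "I = (\<integral>p. norm (g p) \<partial>M)"
  have "I \<ge> 0" unfolding I_def by simp
  have approx: "norm (\<integral>p. complex_of_real (h (\<phi> p)) * g p \<partial>M) \<le> e * I" if "e > 0" for e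
  proof -
    obtain q where q: "real_polynomial_function q" and close: "\<And>s. s \<in> {-B..B} \<Longrightarrow> \<bar>h s - q s\<bar> < e"
      using Stone_Weierstrass_real_polynomial_function[of "{-B..B}" h e] \<open>e > 0\<close>
        continuous_on_subset[OF h] by auto
    obtain c N where q_eq: "q = (\<lambda>s. \<Sum>i\<le>N. c i * s ^ i)"
      using q real_polynomial_function_iff_sum by blast
    have [measurable]: "q \<in> borel_measurable borel" unfolding q_eq by measurable
    have power_int: "integrable M (\<lambda>p. complex_of_real (\<phi> p ^ i) * g p)" for i
      by (rule integrable_bounded_comp_mult[OF g, where r = "\<lambda>s. s ^ i" and C = "B ^ i"])
        (use bound in \<open>auto simp: power_abs intro: power_mono\<close>)
    have "(\<lambda>p. complex_of_real (q (\<phi> p)) * g p)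
        = (\<lambda>p. \<Sum>i\<le>N. complex_of_real (c i) * (complex_of_real (\<phi> p ^ i) * g p))"
      unfolding q_eq by (simp add: sum_distrib_left sum_distrib_right mult_ac)
    then have q_int: "integrable M (\<lambda>p. complex_of_real (q (\<phi> p)) * g p)"
      and q_zero: "(\<integral>p. complex_of_real (q (\<phi> p)) * g p \<partial>M) = 0"
      using power_int moments by simp_all
    have close': "\<bar>h s - q s\<bar> \<le> e" if "\<bar>s\<bar> \<le> B" for s
      using close[of s] that by (simp add: abs_le_iff less_imp_le)
    note diff_bounds =
      integrable_bounded_comp_mult[where \<phi> = \<phi> and r = "\<lambda>s. h s - q s", OF g _ _ bound close']
      norm_integral_bounded_comp_mult_le[where \<phi> = \<phi> and r = "\<lambda>s. h s - q s", OF g _ _ bound close']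
    have diff_int: "integrable M (\<lambda>p. complex_of_real (h (\<phi> p) - q (\<phi> p)) * g p)"
      and diff_le: "norm (\<integral>p. complex_of_real (h (\<phi> p) - q (\<phi> p)) * g p \<partial>M) \<le> e * I"
      using diff_bounds unfolding I_def by simp_all
    have "(\<integral>p. complex_of_real (h (\<phi> p)) * g p \<partial>M)
        = (\<integral>p. complex_of_real (h (\<phi> p) - q (\<phi> p)) * g p + complex_of_real (q (\<phi> p)) * g p \<partial>M)"
      by (simp add: algebra_simps)
    also have "\<dots> = (\<integral>p. complex_of_real (h (\<phi> p) - q (\<phi> p)) * g p \<partial>M)"
      using diff_int q_int q_zero by simp
    finally show ?thesis using diff_le by simp
  qed
  have "norm (\<integral>p. complex_of_real (h (\<phi> p)) * g p \<partial>M) \<le> 0"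
  proof (rule field_le_epsilon)
    fix e :: real assume "e > 0"
    then have "norm (\<integral>p. complex_of_real (h (\<phi> p)) * g p \<partial>M) \<le> e / (I + 1) * I"
      using \<open>I \<ge> 0\<close> by (intro approx) auto
    also have "\<dots> \<le> e"
      using \<open>e > 0\<close> \<open>I \<ge> 0\<close> by (simp add: field_simps)
    finally show "norm (\<integral>p. complex_of_real (h (\<phi> p)) * g p \<partial>M) \<le> 0 + e" by simp
  qed
  then show ?thesis by simp
qed

lemma integral_comp_eq_0_if_fourier_eq_0:
  fixes g :: "'a \<Rightarrow> complex" and \<phi> :: "'a \<Rightarrow> real" and h :: "real \<Rightarrow> real"
  assumes g: "integrable M g" and [measurable]: "\<phi> \<in> borel_measurable M"
    and bound: "\<And>p. g p \<noteq> 0 \<Longrightarrow> \<bar>\<phi> p\<bar> \<le> B" and "K > 0"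
    and fourier: "AE k in lborel. k \<in> {0<..<K} \<longrightarrow>
      (\<integral>p. exp (\<i> * complex_of_real (k * \<phi> p)) * g p \<partial>M) = 0"
    and h: "continuous_on UNIV h"
  shows "(\<integral>p. complex_of_real (h (\<phi> p)) * g p \<partial>M) = 0"
proof -
  define m where "m n = (\<integral>p. complex_of_real (\<phi> p ^ n) * g p \<partial>M)" for n
  have bound': "\<bar>\<phi> p\<bar> \<le> \<bar>B\<bar>" if "g p \<noteq> 0" for p
    using bound[OF that] by simp
  have "(\<lambda>n. (\<i> ^ n / fact n * m n) * w ^ n)
      sums (\<integral>p. exp (\<i> * (w * complex_of_real (\<phi> p))) * g p \<partial>M)" for w
    using integral_exp_moments_sums[OF g _ bound' abs_ge_zero, where k = w]
    by (simp add: m_def power_mult_distrib mult_ac)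
  moreover have "AE k in lborel. k \<in> {0<..<K} \<longrightarrow>
      (\<integral>p. exp (\<i> * (complex_of_real k * complex_of_real (\<phi> p))) * g p \<partial>M) = 0"
    using fourier by (simp add: of_real_mult)
  ultimately have "\<i> ^ n / fact n * m n = 0" for n
    by (rule powser_eq_0_imp_coeffs_eq_0[OF _ \<open>K > 0\<close>])
  then have "m n = 0" for n by simp
  then show ?thesis
    by (intro integral_comp_eq_0_if_moments_eq_0[OF g _ bound _ h]) (simp_all add: m_def)
qed

section \<open>Reflections in hyperplanes\<close>

definition hyperplane_reflection :: "'a::real_inner \<Rightarrow> 'a \<Rightarrow> 'a \<Rightarrow> 'a" where
  "hyperplane_reflection x n z = z - (2 * ((z - x) \<bullet> n)) *\<^sub>R n"

lemma orthogonal_transformation_reflection: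
  fixes n :: "'a::real_inner"
  assumes "norm n = 1"
  shows "orthogonal_transformation (\<lambda>v. v - (2 * (v \<bullet> n)) *\<^sub>R n)"
  unfolding orthogonal_transformation_def
proof (intro conjI allI)
  show "linear (\<lambda>v. v - (2 * (v \<bullet> n)) *\<^sub>R n)"
    by (simp add: linear_iff inner_add_left algebra_simps)
  have "n \<bullet> n = 1" using assms by (simp add: norm_eq_1)
  then show "(v - (2 * (v \<bullet> n)) *\<^sub>R n) \<bullet> (w - (2 * (w \<bullet> n)) *\<^sub>R n) = v \<bullet> w" for v w
    by (simp add: inner_diff_left inner_diff_right inner_commute algebra_simps)
qed

lemma hyperplane_reflection_eq:
  "hyperplane_reflection x n z = x + (\<lambda>v. v - (2 * (v \<bullet> n)) *\<^sub>R n) (z - x)"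
  unfolding hyperplane_reflection_def by (simp add: algebra_simps)

lemma hyperplane_reflection_involutive:
  assumes "norm n = 1"
  shows "hyperplane_reflection x n (hyperplane_reflection x n z) = z"
proof -
  have "n \<bullet> n = 1" using assms by (simp add: norm_eq_1)
  then show ?thesis unfolding hyperplane_reflection_def
    by (simp add: inner_diff_left inner_commute algebra_simps)
qed

lemma dist_hyperplane_reflection:
  assumes "norm n = 1"
  shows "dist (hyperplane_reflection x n a) (hyperplane_reflection x n b) = dist a b"
proof -
  have "hyperplane_reflection x n a - hyperplane_reflection x n b = (\<lambda>v. v - (2 * (v \<bullet> n)) *\<^sub>R n) (a - b)"
    unfolding hyperplane_reflection_def by (simp add: inner_diff_left algebra_simps)
  then show ?thesis
    using orthogonal_transformation_norm[OF orthogonal_transformation_reflection[OF assms]]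
    by (simp add: dist_norm)
qed

lemma hyperplane_reflection_fixes [simp]: "hyperplane_reflection x n x = x"
  unfolding hyperplane_reflection_def by simp

lemma continuous_on_hyperplane_reflection: "continuous_on S (hyperplane_reflection x n)"
  unfolding hyperplane_reflection_def by (intro continuous_intros)

lemma borel_measurable_hyperplane_reflection [measurable]:
  "hyperplane_reflection x n \<in> borel_measurable borel"
  by (intro borel_measurable_continuous_onI continuous_on_hyperplane_reflection)

lemma hyperplane_reflection_bisector:
  assumes "dist x z = dist x y" "y \<noteq> z"
  defines "n \<equiv> (1 / norm (y - z)) *\<^sub>R (y - z)"
  shows "norm n = 1" "hyperplane_reflection x n z = y"
proof -
  have nz: "norm (y - z) \<noteq> 0" using assms(2) by simp
  then show "norm n = 1" unfolding n_def by simp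
  have "(x - y) \<bullet> (x - y) = (x - z) \<bullet> (x - z)"
    using assms(1) by (simp add: dist_norm power2_norm_eq_inner[symmetric])
  then have "(z - x) \<bullet> (y - z) = - ((y - z) \<bullet> (y - z)) / 2"
    by (simp add: inner_diff_left inner_diff_right inner_commute algebra_simps)
  then have "(z - x) \<bullet> n = - norm (y - z) / 2"
    unfolding n_def using nz by (simp add: power2_norm_eq_inner[symmetric] power2_eq_square)
  then have "hyperplane_reflection x n z = z + norm (y - z) *\<^sub>R n"
    unfolding hyperplane_reflection_def by simp
  also have "\<dots> = y" using nz unfolding n_def by simp
  finally show "hyperplane_reflection x n z = y" .
qed

lemma lborel_distr_hyperplane_reflection:
  fixes x n :: "real^'n::{finite,wellorder}"
  assumes n: "norm n = 1"
  shows "distr lborel borel (hyperplane_reflection x n) = lborel"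
proof (rule lborel_eqI[symmetric])
  fix l u :: "real^'n::{finite,wellorder}" assume le: "\<And>b. b \<in> Basis \<Longrightarrow> l \<bullet> b \<le> u \<bullet> b"
  let ?H = "hyperplane_reflection x n"
  have borel: "?H -` box l u \<in> sets borel"
    using measurable_sets[OF borel_measurable_hyperplane_reflection, of "box l u"] by simp
  have preimage: "?H -` box l u = ?H ` box l u"
    using hyperplane_reflection_involutive[OF n] by (auto simp: image_iff) metis
  have image: "?H ` box l u = (+) x ` (\<lambda>v. v - (2 * (v \<bullet> n)) *\<^sub>R n) ` (\<lambda>z. z - x) ` box l u"
    unfolding image_image hyperplane_reflection_eq ..
  note Q = orthogonal_transformation_reflection[OF n]
  have "emeasure (distr lborel borel ?H) (box l u) = emeasure lebesgue (?H ` box l u)"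
    using borel preimage by (simp add: emeasure_distr)
  also have "\<dots> = measure lebesgue (?H ` box l u)"
    unfolding image
    by (intro emeasure_eq_measure2 measurable_translation measurable_orthogonal_image[OF Q]
        measurable_translation_subtract) simp
  also have "\<dots> = measure lebesgue (box l u)"
    unfolding image
    by (simp add: measure_translation measure_orthogonal_image[OF Q]
        measurable_translation_subtract measure_translation_subtract)
  also have "\<dots> = (\<Prod>b\<in>Basis. (u - l) \<bullet> b)"
    using le by (simp add: emeasure_eq_measure2)
  finally show "emeasure (distr lborel borel ?H) (box l u) = (\<Prod>b\<in>Basis. (u - l) \<bullet> b)" .
qed simp

lemma integral_hyperplane_reflection_fst:
  fixes x n :: "real^'n::{finite,wellorder}"
    and f :: "(real^'n::{finite,wellorder}) \<times> 'b::euclidean_space \<Rightarrow> 'c::{banach,second_countable_topology}"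
  assumes n: "norm n = 1" and [measurable]: "f \<in> borel_measurable borel"
  shows "integral\<^sup>L lborel f = (\<integral>p. f (hyperplane_reflection x n (fst p), snd p) \<partial>lborel)"
proof -
  let ?H = "\<lambda>p::_ \<times> 'b. (hyperplane_reflection x n (fst p), snd p)"
  have H: "?H \<in> borel_measurable borel"
    unfolding hyperplane_reflection_def by (intro borel_measurable_continuous_onI continuous_intros)
  have "distr lborel borel (hyperplane_reflection x n) \<Otimes>\<^sub>M distr lborel borel (\<lambda>t::'b. t)
      = distr (lborel \<Otimes>\<^sub>M lborel) (borel \<Otimes>\<^sub>M borel) (\<lambda>(a, b). (hyperplane_reflection x n a, b))"
    by (rule pair_measure_distr)
      (auto simp: distr_id2 lborel_distr_hyperplane_reflection[OF n] intro: lborel.sigma_finite_measure_axioms)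
  also have "\<dots> = distr lborel borel ?H"
    by (rule distr_cong) (simp_all add: lborel_prod borel_prod[symmetric] split: prod.split)
  finally have "distr lborel borel ?H = lborel"
    by (simp add: lborel_distr_hyperplane_reflection[OF n] distr_id2 lborel_prod eq_commute)
  then have "integral\<^sup>L lborel f = integral\<^sup>L (distr lborel borel ?H) f" by simp
  also have "\<dots> = (\<integral>p. f (?H p) \<partial>lborel)"
    using H by (intro integral_distr) simp_all
  finally show ?thesis .
qed

lemma set_integral_ball_eq_if_equidistant:
  fixes x y z :: "real^'n::{finite,wellorder}" and f :: "real \<Rightarrow> 'c::{banach,second_countable_topology}"
  assumes "dist x z = dist x y" and [measurable]: "J \<in> sets borel" "f \<in> borel_measurable borel"
  shows "(LINT p : ball y e \<times> J | lborel. f (snd p + dist x (fst p)))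
       = (LINT p : ball z e \<times> J | lborel. f (snd p + dist x (fst p)))"
proof (cases "y = z")
  case False
  define n where "n \<equiv> (1 / norm (y - z)) *\<^sub>R (y - z)"
  have n: "norm n = 1" and Hz: "hyperplane_reflection x n z = y"
    using hyperplane_reflection_bisector[OF assms(1) False] unfolding n_def by auto
  have "dist x (hyperplane_reflection x n w) = dist x w"
    and "dist y (hyperplane_reflection x n w) = dist z w" for w
    using dist_hyperplane_reflection[OF n, of x x w] dist_hyperplane_reflection[OF n, of x z w]
    by (simp_all add: Hz)
  then show ?thesis
    unfolding set_lebesgue_integral_def
    by (subst integral_hyperplane_reflection_fst[OF n, of _ x])
      (auto simp: indicator_def mem_Times_iff borel_prod[symmetric] intro!: Bochner_Integration.integral_cong)
qed simp

section \<open>Distances from a bounded domain\<close>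

lemma bdd_above_dist_image:
  assumes "bounded D"
  shows "bdd_above ((\<lambda>z. dist x z) ` D)"
proof -
  obtain B where "\<forall>z\<in>D. dist x z \<le> B"
    using assms bounded_any_center by blast
  then show ?thesis by (auto intro: bdd_aboveI2)
qed

lemma bdd_below_dist_image: "bdd_below ((\<lambda>z. dist x z) ` D)"
  by (rule bdd_belowI2[where m = 0]) simp

lemma dist_attained_on_connected:
  fixes D :: "'a::metric_space set"
  assumes "bounded D" "connected D" "D \<noteq> {}"
    and "(INF z\<in>D. dist x z) < r" "r < (SUP z\<in>D. dist x z)"
  obtains z where "z \<in> D" "dist x z = r"
proof -
  obtain z1 where z1: "z1 \<in> D" "dist x z1 < r"
    using assms(4) cINF_less_iff[OF assms(3) bdd_below_dist_image] by blast
  obtain z2 where z2: "z2 \<in> D" "r < dist x z2"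
    using assms(5) less_cSUP_iff[OF assms(3) bdd_above_dist_image[OF assms(1)]] by blast
  have "connected ((\<lambda>z. dist x z) ` D)"
    by (intro connected_continuous_image assms(2) continuous_intros)
  then have "{dist x z1..dist x z2} \<subseteq> (\<lambda>z. dist x z) ` D"
    by (rule connected_contains_Icc) (use z1 z2 in auto)
  moreover have "r \<in> {dist x z1..dist x z2}" using z1 z2 by auto
  ultimately show ?thesis using that by blast
qed

lemma exists_unit_direction:
  fixes x p :: "'a::euclidean_space"
  obtains w where "norm w = 1" "p - x = dist x p *\<^sub>R w"
proof (cases "p = x")
  case True
  obtain w :: 'a where "w \<in> Basis" using nonempty_Basis by blast
  with True that[of w] show ?thesis by (simp add: norm_Basis)
next
  case False
  with that[of "(1 / norm (p - x)) *\<^sub>R (p - x)"] show ?thesis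
    by (auto simp: dist_norm norm_minus_commute)
qed

lemma dist_add_along_direction:
  fixes x p w :: "'a::real_normed_vector"
  assumes "norm w = 1" "p - x = dist x p *\<^sub>R w" "dist x p + s \<ge> 0"
  shows "dist x (p + s *\<^sub>R w) = dist x p + s"
proof -
  have "p + s *\<^sub>R w - x = (dist x p + s) *\<^sub>R w"
    using assms(2) by (simp add: algebra_simps)
  then have "dist x (p + s *\<^sub>R w) = norm ((dist x p + s) *\<^sub>R w)"
    by (metis dist_norm dist_commute)
  then show ?thesis
    using assms(1,3) by simp
qed

lemma INF_dist_less_SUP_dist:
  fixes D :: "'a::euclidean_space set"
  assumes "open D" "bounded D" "D \<noteq> {}"
  shows "(INF z\<in>D. dist x z) < (SUP z\<in>D. dist x z)"
proof -
  obtain z where z: "z \<in> D" using assms(3) by blast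
  obtain \<delta> where \<delta>: "\<delta> > 0" "ball z \<delta> \<subseteq> D" using assms(1) z openE by blast
  obtain w where w: "norm w = 1" "z - x = dist x z *\<^sub>R w" by (rule exists_unit_direction)
  define z' where "z' = z + (\<delta>/2) *\<^sub>R w"
  have "z' \<in> D" using \<delta> w unfolding z'_def by (intro subsetD[OF \<delta>(2)]) (simp add: dist_norm)
  have "(INF z\<in>D. dist x z) \<le> dist x z" by (rule cINF_lower[OF bdd_below_dist_image z])
  also have "\<dots> < dist x z'"
    unfolding z'_def using w \<delta> by (subst dist_add_along_direction) auto
  also have "\<dots> \<le> (SUP z\<in>D. dist x z)"
    by (rule cSUP_upper[OF \<open>z' \<in> D\<close> bdd_above_dist_image[OF assms(2)]])
  finally show ?thesis .
qed

lemma dist_outside_closure_annulus_D_eta: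
  fixes D :: "pt set"
  assumes "open D" "bounded D" "D \<noteq> {}" "\<eta> \<le> tmax"
    and "y \<notin> closure (annulus_D_eta D tmax \<eta> x)"
  shows "dist x y < (INF z\<in>D. dist x z) \<or> (SUP z\<in>D. dist x z) + tmax - \<eta> < dist x y"
proof (rule ccontr)
  define a where "a = (INF z\<in>D. dist x z)"
  define c where "c = (SUP z\<in>D. dist x z) + tmax - \<eta>"
  define d where "d = dist x y"
  assume "\<not> ?thesis"
  then have ad: "a \<le> d" "d \<le> c" unfolding a_def c_def d_def by auto
  have ac: "a < c" using INF_dist_less_SUP_dist[OF assms(1-3), of x] assms(4) unfolding a_def c_def by simp
  have a0: "a \<ge> 0" unfolding a_def using assms(3) by (intro cINF_greatest) auto
  obtain w where w: "norm w = 1" "y - x = d *\<^sub>R w"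
    unfolding d_def by (rule exists_unit_direction)
  have "y \<in> closure (annulus_D_eta D tmax \<eta> x)"
    unfolding closure_approachable
  proof (intro allI impI)
    fix e :: real assume e: "e > 0"
    \<comment> \<open>move from \<open>y\<close> radially into the open annulus\<close>
    define s where "s = (if d < c then min (e/2) ((c - d)/2) else - min (e/2) ((c - a)/2))"
    have s: "a < d + s" "d + s < c" "\<bar>s\<bar> < e"
      using ad ac e by (auto simp: s_def min_def field_simps)
    have "dist x (y + s *\<^sub>R w) = d + s"
      using dist_add_along_direction[of w y x s] w s a0 unfolding d_def by auto
    then have "y + s *\<^sub>R w \<in> annulus_D_eta D tmax \<eta> x"
      unfolding annulus_D_eta_def using s unfolding a_def c_def by auto
    moreover have "dist (y + s *\<^sub>R w) y < e" using w s by (simp add: dist_norm)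
    ultimately show "\<exists>z\<in>annulus_D_eta D tmax \<eta> x. dist z y < e" by blast
  qed
  with assms(5) show False by simp
qed

section \<open>Test functions in the range\<close>

lemma scaled_indicator_in_XD:
  assumes "S \<subseteq> D \<times> {tmin<..<tmax}" "S \<in> sets borel" "emeasure lborel S < \<infinity>"
  shows "(\<lambda>p. complex_of_real c * indicator S p) \<in> XD D tmin tmax"
  unfolding XD_def set_integrable_def
proof (intro CollectI conjI)
  show "(\<lambda>p. complex_of_real c * indicator S p) \<in> borel_measurable lborel"
    using assms(2) by measurable
  have "integrable lborel (\<lambda>p. c\<^sup>2 * indicator S p)"
    using assms(2,3) by (intro integrable_mult_right integrable_real_indicator) auto
  moreover have "indicator (D \<times> {tmin<..<tmax}) p *\<^sub>R (cmod (complex_of_real c * indicator S p))\<^sup>2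
      = c\<^sup>2 * indicator S p" for p
    using assms(1) by (auto simp: indicator_def power2_eq_square norm_mult)
  ultimately show "integrable lborel (\<lambda>p. indicator (D \<times> {tmin<..<tmax}) p *\<^sub>R
      (cmod (complex_of_real c * indicator S p))\<^sup>2)"
    by simp
qed

lemma LD_uniform_source_eq_test_fn:
  fixes D :: "pt set" and tmin :: real
  assumes "ball z \<epsilon> \<subseteq> D" "\<eta> \<le> tmax" "dist x z = dist x y"
  defines "c \<equiv> 1 / ((\<eta> - tmin) * measure lborel (ball y \<epsilon>))"
  shows "LD D tmin tmax x (\<lambda>p. complex_of_real c * indicator (ball z \<epsilon> \<times> {tmin<..<\<eta>}) p) \<tau>
       = test_fn tmin x y \<eta> \<epsilon> \<tau>"
proof -
  let ?S = "ball z \<epsilon> \<times> {tmin<..<\<eta>}"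
  let ?f = "\<lambda>s::real. exp (\<i> * complex_of_real (\<tau> * s))"
  have "?S \<subseteq> D \<times> {tmin<..<tmax}" using assms(1,2) by auto
  then have pointwise: "indicator (D \<times> {tmin<..<tmax}) p *\<^sub>R (?f (snd p + dist x (fst p)) * (complex_of_real c * indicator ?S p))
      = complex_of_real c * (indicator ?S p *\<^sub>R ?f (snd p + dist x (fst p)))" for p
    by (cases "p \<in> ?S") (auto simp: indicator_def)
  have "LD D tmin tmax x (\<lambda>p. complex_of_real c * indicator ?S p) \<tau>
      = complex_of_real c * (LINT p : ?S | lborel. ?f (snd p + dist x (fst p)))"
    unfolding LD_def set_lebesgue_integral_def
    by (subst Bochner_Integration.integral_cong[OF refl pointwise]) (rule integral_mult_right_zero)
  also have "\<dots> = complex_of_real c * (LINT p : ball y \<epsilon> \<times> {tmin<..<\<eta>} | lborel. ?f (snd p + dist x (fst p)))"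
    using set_integral_ball_eq_if_equidistant[OF assms(3), of "{tmin<..<\<eta>}" ?f \<epsilon>] by simp
  also have "\<dots> = test_fn tmin x y \<eta> \<epsilon> \<tau>"
    unfolding test_fn_def c_def by simp
  finally show ?thesis .
qed

lemma test_fn_in_range_LD:
  fixes D :: "pt set"
  assumes "open D" "bounded D" "connected D" "D \<noteq> {}" "y \<in> annulus_D D x"
  shows "\<exists>\<epsilon>0>0. \<forall>\<epsilon>\<in>{0<..<\<epsilon>0}. \<forall>\<eta>\<in>{tmin<..tmax}.
           in_range_LD D tmin tmax K x (test_fn tmin x y \<eta> \<epsilon>)"
proof -
  obtain z where z: "z \<in> D" "dist x z = dist x y"
    using dist_attained_on_connected[OF assms(2-4)] assms(5) unfolding annulus_D_def by blast
  obtain \<delta> where \<delta>: "\<delta> > 0" "ball z \<delta> \<subseteq> D" using assms(1) z(1) openE by blast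
  have "in_range_LD D tmin tmax K x (test_fn tmin x y \<eta> \<epsilon>)"
    if "\<epsilon> \<in> {0<..<\<delta>}" "\<eta> \<in> {tmin<..tmax}" for \<epsilon> \<eta>
  proof -
    let ?S = "ball z \<epsilon> \<times> {tmin<..<\<eta>}"
    let ?c = "1 / ((\<eta> - tmin) * measure lborel (ball y \<epsilon>))"
    have "ball z \<epsilon> \<subseteq> D" using \<delta> that(1) by auto
    moreover have "emeasure lborel ?S < \<infinity>"
      by (intro emeasure_bounded_finite bounded_Times) auto
    ultimately have "(\<lambda>p. complex_of_real ?c * indicator ?S p) \<in> XD D tmin tmax"
      using that(2) by (intro scaled_indicator_in_XD borel_open open_Times) auto
    moreover have "LD D tmin tmax x (\<lambda>p. complex_of_real ?c * indicator ?S p) \<tau> = test_fn tmin x y \<eta> \<epsilon> \<tau>" for \<tau>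
      using \<open>ball z \<epsilon> \<subseteq> D\<close> that(2) z(2) by (intro LD_uniform_source_eq_test_fn) auto
    ultimately show ?thesis unfolding in_range_LD_def by auto
  qed
  with \<delta>(1) show ?thesis by blast
qed

section \<open>Test functions outside the range\<close>

lemma set_integrable_if_square_integrable:
  fixes u :: "'a \<Rightarrow> complex"
  assumes [measurable]: "u \<in> borel_measurable M" "S \<in> sets M"
    and "emeasure M S < \<infinity>" and square: "set_integrable M S (\<lambda>p. (cmod (u p))\<^sup>2)"
  shows "set_integrable M S u"
  unfolding set_integrable_def
proof (rule Bochner_Integration.integrable_bound)
  show "integrable M (\<lambda>p. indicator S p + indicator S p *\<^sub>R (cmod (u p))\<^sup>2 :: real)"
    using assms(3) square unfolding set_integrable_def
    by (intro Bochner_Integration.integrable_add integrable_real_indicator) auto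
  have "cmod (u p) \<le> 1 + (cmod (u p))\<^sup>2" for p
    using sum_power2_ge_zero[of "cmod (u p) - 1" 0]
    by (simp add: power2_eq_square algebra_simps) (use norm_ge_zero[of "u p"] in linarith)
  then show "AE p in M. norm (indicator S p *\<^sub>R u p) \<le> norm (indicator S p + indicator S p *\<^sub>R (cmod (u p))\<^sup>2 :: real)"
    by (intro AE_I2) (auto simp: indicator_def)
qed simp

lemma set_integral_pos_if_continuous:
  fixes f :: "'a::euclidean_space \<Rightarrow> real"
  assumes "open U" "continuous_on UNIV f" "\<And>p. f p \<ge> 0" "p \<in> U" "f p > 0"
    and "set_integrable lborel U f"
  shows "(LINT p:U|lborel. f p) > 0"
proof -
  have "(LINT p:U|lborel. f p) \<noteq> 0"
  proof
    assume "(LINT p:U|lborel. f p) = 0"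
    then have "AE p in lborel. indicator U p * f p = 0"
      using assms(3,6) integral_nonneg_eq_0_iff_AE[of lborel "\<lambda>p. indicator U p * f p"]
      unfolding set_integrable_def set_lebesgue_integral_def by simp
    moreover have "open (U \<inter> {p. f p > 0})"
      using assms(1,2) by (intro open_Int open_Collect_less continuous_intros) auto
    ultimately obtain q where "q \<in> U \<inter> {p. f p > 0}" "indicator U q * f q = 0"
      using AE_lborel_imp_ex_in_open[of "\<lambda>p. indicator U p * f p = 0"] assms(4,5) by blast
    then show False by simp
  qed
  moreover have "(LINT p:U|lborel. f p) \<ge> 0"
    using assms(3) unfolding set_lebesgue_integral_def by (intro integral_nonneg_AE) auto
  ultimately show ?thesis by simp
qed

lemma exists_cutoff_vanishing_on_interval:
  fixes a b d \<eta> tmin tmax :: real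
  assumes "d < a \<or> b + tmax - \<eta> < d" "tmin < \<eta>"
  obtains h :: "real \<Rightarrow> real" and t0 where "continuous_on UNIV h" "\<And>s. 0 \<le> h s \<and> h s \<le> 1"
    "\<And>s. tmin + a \<le> s \<Longrightarrow> s \<le> tmax + b \<Longrightarrow> h s = 0" "t0 \<in> {tmin<..<\<eta>}" "h (t0 + d) > 0"
  using assms(1)
proof
  assume "d < a"
  show thesis
  proof (rule that)
    show "continuous_on UNIV (\<lambda>s. min 1 (max 0 (tmin + a - s)))" by (intro continuous_intros)
    show "tmin + min ((a - d) / 2) ((\<eta> - tmin) / 2) \<in> {tmin<..<\<eta>}"
      using \<open>d < a\<close> assms(2) by (auto simp: min_def field_simps)
    show "min 1 (max 0 (tmin + a - (tmin + min ((a - d) / 2) ((\<eta> - tmin) / 2) + d))) > 0"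
      using \<open>d < a\<close> assms(2) by (auto simp: min_def field_simps)
  qed auto
next
  assume "b + tmax - \<eta> < d"
  show thesis
  proof (rule that)
    show "continuous_on UNIV (\<lambda>s. min 1 (max 0 (s - (tmax + b))))" by (intro continuous_intros)
    show "\<eta> - min ((d - (b + tmax - \<eta>)) / 2) ((\<eta> - tmin) / 2) \<in> {tmin<..<\<eta>}"
      using \<open>b + tmax - \<eta> < d\<close> assms(2) by (auto simp: min_def field_simps)
    show "min 1 (max 0 (\<eta> - min ((d - (b + tmax - \<eta>)) / 2) ((\<eta> - tmin) / 2) + d - (tmax + b))) > 0"
      using \<open>b + tmax - \<eta> < d\<close> assms(2) by (auto simp: min_def field_simps)
  qed auto
qed

text \<open>\<open>u\<close> minus the normalised uniform source on \<open>B\<^sub>\<epsilon>(y) \<times> (t\<^sub>m\<^sub>i\<^sub>n, \<eta>)\<close>, whose data is the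
  test function.\<close>
definition source_difference ::
    "pt set \<Rightarrow> real \<Rightarrow> real \<Rightarrow> (pt \<times> real \<Rightarrow> complex) \<Rightarrow> pt \<Rightarrow> real \<Rightarrow> real \<Rightarrow> pt \<times> real \<Rightarrow> complex" where
  "source_difference D tmin tmax u y \<eta> \<epsilon> p =
     indicator (D \<times> {tmin<..<tmax}) p * u p
     - complex_of_real (1 / ((\<eta> - tmin) * measure lborel (ball y \<epsilon>))) * indicator (ball y \<epsilon> \<times> {tmin<..<\<eta>}) p"

lemma
  fixes D :: "pt set"
  assumes u: "u \<in> XD D tmin tmax" and D: "D \<in> sets borel" "bounded D"
  shows integrable_source_difference: "integrable lborel (source_difference D tmin tmax u y \<eta> \<epsilon>)"
    and LD_minus_test_fn_eq_integral:
      "LD D tmin tmax x u k - test_fn tmin x y \<eta> \<epsilon> k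
       = (\<integral>p. exp (\<i> * complex_of_real (k * (snd p + dist x (fst p)))) * source_difference D tmin tmax u y \<eta> \<epsilon> p \<partial>lborel)"
proof -
  let ?S1 = "D \<times> {tmin<..<tmax}" and ?S2 = "ball y \<epsilon> \<times> {tmin<..<\<eta>}"
  let ?c = "1 / ((\<eta> - tmin) * measure lborel (ball y \<epsilon>))"
  let ?E = "\<lambda>p. exp (\<i> * complex_of_real (k * (snd p + dist x (fst p))))"
  have [measurable]: "?S1 \<in> sets borel" "?S2 \<in> sets borel" "u \<in> borel_measurable borel"
    using D u by (auto simp: XD_def borel_prod[symmetric])
  have finite: "emeasure lborel ?S1 < \<infinity>" "emeasure lborel ?S2 < \<infinity>"
    using D(2) by (intro emeasure_bounded_finite bounded_Times; simp)+
  have "set_integrable lborel ?S1 u"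
    using u finite by (intro set_integrable_if_square_integrable) (auto simp: XD_def)
  then have int1: "integrable lborel (\<lambda>p. indicator ?S1 p * u p)"
    by (simp add: set_integrable_def indicator_times_eq_if indicator_scaleR_eq_if)
  have "integrable lborel (\<lambda>p. complex_of_real (indicator ?S2 p))"
    using finite by (intro integrable_of_real integrable_real_indicator) auto
  then have int2: "integrable lborel (\<lambda>p. indicator ?S2 p :: complex)"
    by (simp add: of_real_indicator)
  show "integrable lborel (source_difference D tmin tmax u y \<eta> \<epsilon>)"
    using int1 int2 unfolding source_difference_def by (intro Bochner_Integration.integrable_diff integrable_mult_right)
  have [measurable]: "?E \<in> borel_measurable borel"
    by (intro borel_measurable_continuous_onI continuous_intros)
  have int1': "integrable lborel (\<lambda>p. ?E p * (indicator ?S1 p * u p))"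
    by (rule Bochner_Integration.integrable_bound[OF int1]) (measurable, auto simp: norm_mult)
  have int2': "integrable lborel (\<lambda>p. ?E p * indicator ?S2 p)"
    by (rule Bochner_Integration.integrable_bound[OF int2]) (measurable, auto simp: norm_mult)
  have "(\<integral>p. ?E p * source_difference D tmin tmax u y \<eta> \<epsilon> p \<partial>lborel)
      = (\<integral>p. ?E p * (indicator ?S1 p * u p) - complex_of_real ?c * (?E p * indicator ?S2 p) \<partial>lborel)"
    unfolding source_difference_def by (simp add: algebra_simps)
  also have "\<dots> = (\<integral>p. ?E p * (indicator ?S1 p * u p) \<partial>lborel) - complex_of_real ?c * (\<integral>p. ?E p * indicator ?S2 p \<partial>lborel)"
    using int1' int2' by simp
  also have "(\<integral>p. ?E p * (indicator ?S1 p * u p) \<partial>lborel) = LD D tmin tmax x u k"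
    unfolding LD_def set_lebesgue_integral_def
    by (intro Bochner_Integration.integral_cong) (simp_all add: indicator_def)
  also have "complex_of_real ?c * (\<integral>p. ?E p * indicator ?S2 p \<partial>lborel) = test_fn tmin x y \<eta> \<epsilon> k"
    unfolding test_fn_def set_lebesgue_integral_def
    by (intro arg_cong2[where f = "(*)"] Bochner_Integration.integral_cong) (simp_all add: indicator_def)
  finally show "LD D tmin tmax x u k - test_fn tmin x y \<eta> \<epsilon> k
      = (\<integral>p. ?E p * source_difference D tmin tmax u y \<eta> \<epsilon> p \<partial>lborel)" ..
qed

lemma arrival_time_bounded_on_source_difference:
  fixes D :: "pt set"
  assumes "bounded D" "\<eta> \<le> tmax"
  obtains B where "\<And>p. source_difference D tmin tmax u y \<eta> \<epsilon> p \<noteq> 0 \<Longrightarrow> \<bar>snd p + dist x (fst p)\<bar> \<le> B"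
proof -
  obtain R where R: "\<And>z. z \<in> D \<Longrightarrow> dist x z \<le> R"
    using assms(1) bounded_any_center by blast
  show thesis
  proof (rule that[of "\<bar>tmin\<bar> + \<bar>tmax\<bar> + max R (dist x y + \<epsilon>)"])
    fix p :: "pt \<times> real"
    assume "source_difference D tmin tmax u y \<eta> \<epsilon> p \<noteq> 0"
    then have "p \<in> D \<times> {tmin<..<tmax} \<or> p \<in> ball y \<epsilon> \<times> {tmin<..<\<eta>}"
      unfolding source_difference_def by (auto simp: indicator_def split: if_splits)
    moreover have "dist x z \<le> dist x y + \<epsilon>" if "dist y z < \<epsilon>" for z
      using dist_triangle[of x z y] that by simp
    ultimately have "\<bar>snd p\<bar> \<le> \<bar>tmin\<bar> + \<bar>tmax\<bar>" "dist x (fst p) \<le> max R (dist x y + \<epsilon>)"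
      using R assms(2) by (auto simp: mem_Times_iff intro: le_max_iff_disj[THEN iffD2])
    then show "\<bar>snd p + dist x (fst p)\<bar> \<le> \<bar>tmin\<bar> + \<bar>tmax\<bar> + max R (dist x y + \<epsilon>)"
      using zero_le_dist[of x "fst p"] by arith
  qed
qed

lemma integral_cutoff_source_difference_neq_0:
  fixes D :: "pt set" and h :: "real \<Rightarrow> real"
  assumes "bounded D" "tmin < \<eta>" "\<epsilon> > 0"
    and h: "continuous_on UNIV h" "\<And>s. 0 \<le> h s \<and> h s \<le> 1"
    and h_zero: "\<And>s. tmin + (INF z\<in>D. dist x z) \<le> s \<Longrightarrow> s \<le> tmax + (SUP z\<in>D. dist x z) \<Longrightarrow> h s = 0"
    and t0: "t0 \<in> {tmin<..<\<eta>}" "h (t0 + dist x y) > 0"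
  shows "(\<integral>p. complex_of_real (h (snd p + dist x (fst p))) * source_difference D tmin tmax u y \<eta> \<epsilon> p \<partial>lborel) \<noteq> 0"
proof -
  define \<phi> where "\<phi> p = snd p + dist x (fst p)" for p :: "pt \<times> real"
  define c where "c = 1 / ((\<eta> - tmin) * measure lborel (ball y \<epsilon>))"
  let ?S1 = "D \<times> {tmin<..<tmax}" and ?S2 = "ball y \<epsilon> \<times> {tmin<..<\<eta>}"
  have \<phi>_cont: "continuous_on UNIV \<phi>" unfolding \<phi>_def by (intro continuous_intros)
  then have [measurable]: "\<phi> \<in> borel_measurable borel" by (rule borel_measurable_continuous_onI)
  have [measurable]: "h \<in> borel_measurable borel"
    using h(1) by (rule borel_measurable_continuous_onI)
  \<comment> \<open>on the support of \<open>u\<close> the arrival time lies where \<open>h\<close> vanishes\<close>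
  have pointwise: "complex_of_real (h (\<phi> p)) * source_difference D tmin tmax u y \<eta> \<epsilon> p
      = - c * complex_of_real (indicator ?S2 p * h (\<phi> p))" for p
  proof (cases "p \<in> ?S1")
    case True
    then have "(INF z\<in>D. dist x z) \<le> dist x (fst p)" "dist x (fst p) \<le> (SUP z\<in>D. dist x z)"
      by (auto intro!: cINF_lower cSUP_upper bdd_below_dist_image bdd_above_dist_image assms(1))
    with True have "h (\<phi> p) = 0" unfolding \<phi>_def by (intro h_zero) auto
    then show ?thesis by simp
  qed (simp add: c_def source_difference_def of_real_indicator)
  have "(\<integral>p. complex_of_real (h (\<phi> p)) * source_difference D tmin tmax u y \<eta> \<epsilon> p \<partial>lborel)
      = (\<integral>p. - c * complex_of_real (indicator ?S2 p * h (\<phi> p)) \<partial>lborel)"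
    by (simp only: pointwise)
  also have "\<dots> = - c * complex_of_real (LINT p:?S2|lborel. h (\<phi> p))"
    by (simp only: integral_mult_right_zero integral_complex_of_real set_lebesgue_integral_def real_scaleR_def)
  finally have integral_eq: "(\<integral>p. complex_of_real (h (\<phi> p)) * source_difference D tmin tmax u y \<eta> \<epsilon> p \<partial>lborel)
      = - c * complex_of_real (LINT p:?S2|lborel. h (\<phi> p))" .
  have "c > 0"
    unfolding c_def using assms(2) content_ball_pos[OF \<open>\<epsilon> > 0\<close>] by simp
  moreover have "(LINT p:?S2|lborel. h (\<phi> p)) > 0"
  proof (rule set_integral_pos_if_continuous)
    show "open ?S2" by (intro open_Times) auto
    show "continuous_on UNIV (\<lambda>p. h (\<phi> p))"
      by (rule continuous_on_compose2[OF h(1) \<phi>_cont]) auto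
    show "(y, t0) \<in> ?S2" "h (\<phi> (y, t0)) > 0"
      using t0 \<open>\<epsilon> > 0\<close> by (simp_all add: \<phi>_def)
    have [measurable]: "?S2 \<in> sets borel" and "emeasure lborel ?S2 < \<infinity>"
      by (intro borel_open open_Times emeasure_bounded_finite bounded_Times; simp)+
    then have "integrable lborel (indicator ?S2 :: _ \<Rightarrow> real)"
      by (intro integrable_real_indicator) auto
    then show "set_integrable lborel ?S2 (\<lambda>p. h (\<phi> p))"
      unfolding set_integrable_def
      by (rule Bochner_Integration.integrable_bound)
        (measurable, use h(2) in \<open>auto intro!: AE_I2 simp: indicator_def\<close>)
  qed (use h(2) in auto)
  ultimately have "- c * complex_of_real (LINT p:?S2|lborel. h (\<phi> p)) \<noteq> 0" by simp
  with integral_eq show ?thesis by (simp only: \<phi>_def not_False_eq_True)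
qed

lemma test_fn_not_in_range_LD:
  fixes D :: "pt set"
  assumes D: "open D" "bounded D" "D \<noteq> {}" and "\<eta> \<in> {tmin<..tmax}"
    and y: "y \<notin> closure (annulus_D_eta D tmax \<eta> x)" and "\<epsilon> > 0" "K > 0"
  shows "\<not> in_range_LD D tmin tmax K x (test_fn tmin x y \<eta> \<epsilon>)"
proof
  assume "in_range_LD D tmin tmax K x (test_fn tmin x y \<eta> \<epsilon>)"
  then obtain u where u: "u \<in> XD D tmin tmax"
    and data: "AE \<tau> in lborel. \<tau> \<in> {0<..<K} \<longrightarrow> LD D tmin tmax x u \<tau> = test_fn tmin x y \<eta> \<epsilon> \<tau>"
    unfolding in_range_LD_def by blast
  have "D \<in> sets borel" using D(1) by simp
  have \<eta>: "tmin < \<eta>" "\<eta> \<le> tmax" using \<open>\<eta> \<in> {tmin<..tmax}\<close> by simp_all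
  define g where "g = source_difference D tmin tmax u y \<eta> \<epsilon>"
  define \<phi> where "\<phi> p = snd p + dist x (fst p)" for p :: "pt \<times> real"
  have [measurable]: "\<phi> \<in> borel_measurable borel"
    unfolding \<phi>_def by (intro borel_measurable_continuous_onI continuous_intros)
  obtain B where B: "\<And>p. g p \<noteq> 0 \<Longrightarrow> \<bar>\<phi> p\<bar> \<le> B"
    using arrival_time_bounded_on_source_difference[OF D(2) \<eta>(2), of tmin u y \<epsilon> x]
    unfolding g_def \<phi>_def by blast
  have "dist x y < (INF z\<in>D. dist x z) \<or> (SUP z\<in>D. dist x z) + tmax - \<eta> < dist x y"
    by (rule dist_outside_closure_annulus_D_eta[OF D \<eta>(2) y])
  then obtain h :: "real \<Rightarrow> real" and t0 where h: "continuous_on UNIV h" "\<And>s. 0 \<le> h s \<and> h s \<le> 1"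
    and h_zero: "\<And>s. tmin + (INF z\<in>D. dist x z) \<le> s \<Longrightarrow> s \<le> tmax + (SUP z\<in>D. dist x z) \<Longrightarrow> h s = 0"
    and t0: "t0 \<in> {tmin<..<\<eta>}" "h (t0 + dist x y) > 0"
    using exists_cutoff_vanishing_on_interval[OF _ \<eta>(1)] by blast
  have "AE k in lborel. k \<in> {0<..<K} \<longrightarrow>
      (\<integral>p. exp (\<i> * complex_of_real (k * \<phi> p)) * g p \<partial>lborel) = 0"
    using data by eventually_elim
      (unfold g_def \<phi>_def LD_minus_test_fn_eq_integral[OF u \<open>D \<in> sets borel\<close> D(2), symmetric], simp)
  then have "(\<integral>p. complex_of_real (h (\<phi> p)) * g p \<partial>lborel) = 0"
    using integrable_source_difference[OF u \<open>D \<in> sets borel\<close> D(2)]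
    by (intro integral_comp_eq_0_if_fourier_eq_0[OF _ _ B \<open>K > 0\<close> _ h(1)]) (simp_all add: g_def)
  with integral_cutoff_source_difference_neq_0[OF D(2) \<eta>(1) \<open>\<epsilon> > 0\<close> h h_zero t0]
  show False by (simp add: g_def \<phi>_def)
qed

theorem mainTheorem9:
  fixes D :: "(real^3) set" and R tmin tmax kmin kmax :: real and x :: "real^3"
  assumes "lipschitz_domain D"
    and "connected (- closure D)"
    and "D \<subseteq> ball 0 R"
    and "0 \<le> tmin" and "tmin < tmax"
    and "0 \<le> kmin" and "kmin < kmax"
    and "norm x = R"
  shows "(\<forall>y \<in> annulus_D D x. \<exists>\<epsilon>0>0. \<forall>\<epsilon>\<in>{0<..<\<epsilon>0}. \<forall>\<eta>\<in>{tmin<..tmax}.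
            in_range_LD D tmin tmax ((kmax - kmin) / 2) x (test_fn tmin x y \<eta> \<epsilon>))
       \<and> (\<forall>\<eta>\<in>{tmin<..tmax}. \<forall>y. y \<notin> closure (annulus_D_eta D tmax \<eta> x) \<longrightarrow>
            (\<forall>\<epsilon>>0. \<not> in_range_LD D tmin tmax ((kmax - kmin) / 2) x (test_fn tmin x y \<eta> \<epsilon>)))"
proof -
  have D: "open D" "bounded D" "connected D" "D \<noteq> {}"
    using assms(1) unfolding lipschitz_domain_def by blast+
  have "(kmax - kmin) / 2 > 0" using assms(7) by simp
  then show ?thesis
    using test_fn_in_range_LD[OF D] test_fn_not_in_range_LD[OF D(1,2,4)] by blast
qed

end
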